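(* Fix an integer $q \geq 3$ and a real $r \in [0,1]$. Then the function $F(t) = \left(c_q^{t}\, c_{q-1}^{1-t}\right)^{1/(q+t-r)}$ is decreasing on $t \in [0,1]$.
   Context: For integers $q \geq 1$, $c_q := \sqrt{\lfloor (q+2)^2/4 \rfloor}$. *)

theory Defs
  imports "HOL-Analysis.Analysis"
begin

definition cq :: "nat \<Rightarrow> real" where
  "cq q = sqrt (real ((q + 2)^2 div 4))"

end

theory Submission
  imports Defs
begin

text \<open>With \<open>a = ln (cq q)\<close>, \<open>b = ln (cq (q - 1))\<close> and \<open>s = q - r\<close>, the logarithm of
  the function is \<open>(b + t (a - b)) / (s + t) = (a - b) + (b - s (a - b)) / (s + t)\<close>, which
  decreases on \<open>t > -s\<close> as soon as \<open>s (a - b) \<le> b\<close>, i.e. \<open>cq q ^ s \<le> cq (q - 1) ^ (s + 1)\<close>.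
  Since \<open>cq (q - 1) \<le> cq q\<close> and \<open>s \<le> q\<close>, the case \<open>s = q\<close> suffices. Squared, that case
  is an integer inequality which, split by the parity of \<open>q\<close>, reduces to
  \<open>(n + 1) ^ (2n - 1) \<le> n ^ (2n + 1)\<close>, a consequence of \<open>(1 + 1/n) ^ 2n \<le> e ^ 2 < 9\<close>.\<close>

lemma cq_pos: "0 < cq q"
proof -
  have "(2::nat)^2 \<le> (q + 2)^2" by (intro power_mono) auto
  then show ?thesis unfolding cq_def by simp
qed

lemma cq_mono: "mono cq"
  unfolding cq_def by (intro monoI real_sqrt_le_mono of_nat_mono div_le_mono power_mono) auto

lemma one_plus_inverse_power_le_square:
  fixes n :: nat
  assumes "n \<ge> 3"
  shows "(1 + 1 / real n) ^ (2*n - 1) \<le> real n ^ 2"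
proof -
  have "(1 + 1 / real n) ^ (2*n - 1) \<le> (1 + 1 / real n) ^ (2*n)"
    by (rule power_increasing) auto
  also have "\<dots> \<le> exp (1 / real n) ^ (2*n)"
    by (rule power_mono) (auto simp: exp_ge_add_one_self add.commute)
  also have "\<dots> = exp 1 ^ 2"
    using assms by (simp flip: exp_of_nat_mult)
  also have "\<dots> \<le> 3 ^ 2"
    by (rule power_mono) (auto simp: exp_le)
  also have "\<dots> \<le> real n ^ 2"
    using assms by (intro power_mono) auto
  finally show ?thesis .
qed

lemma Suc_power_le_power:
  fixes n :: nat
  assumes "n \<ge> 2"
  shows "(n + 1) ^ (2*n - 1) \<le> n ^ (2*n + 1)"
proof (cases "n = 2")
  case False
  with assms have n: "n \<ge> 3" by auto
  have "real (n + 1) ^ (2*n - 1) = real n ^ (2*n - 1) * (1 + 1 / real n) ^ (2*n - 1)"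
    using n by (simp add: field_simps flip: power_mult_distrib)
  also have "\<dots> \<le> real n ^ (2*n - 1) * real n ^ 2"
    using one_plus_inverse_power_le_square[OF n] by (intro mult_left_mono) auto
  also have "\<dots> = real n ^ (2*n + 1)"
    using n by (simp flip: power_add)
  finally show ?thesis by (metis of_nat_le_iff of_nat_power)
qed simp

lemma quarter_square_power_le:
  fixes q :: nat
  assumes "q \<ge> 3"
  shows "((q + 2)^2 div 4) ^ q \<le> ((q + 1)^2 div 4) ^ (q + 1)"
proof (cases "even q")
  case True
  then obtain m where q: "q = 2*m" by auto
  with assms have m: "m \<ge> 2" by auto
  have A: "(q + 2)^2 div 4 = (m + 1)^2"
    unfolding q by (simp add: power2_eq_square algebra_simps)
  have "(q + 1)^2 = 4 * (m * (m + 1)) + 1"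
    unfolding q by (simp add: power2_eq_square algebra_simps)
  then have B: "(q + 1)^2 div 4 = m * (m + 1)" by simp
  have "(2*m - 1) + (2*m + 1) = 2 * q" using m q by simp
  then have "((m + 1)^2) ^ q = (m + 1) ^ (2*m - 1) * (m + 1) ^ (2*m + 1)"
    by (metis power_add power_mult)
  also have "\<dots> \<le> m ^ (2*m + 1) * (m + 1) ^ (2*m + 1)"
    using Suc_power_le_power[OF m] by (intro mult_right_mono) auto
  also have "\<dots> = (m * (m + 1)) ^ (q + 1)"
    unfolding q by (simp only: power_mult_distrib)
  finally show ?thesis unfolding A B .
next
  case False
  then obtain m where q: "q = 2*m + 1" using oddE by blast
  with assms have m: "m + 1 \<ge> 2" by auto
  have "(q + 2)^2 = 4 * ((m + 1) * (m + 2)) + 1"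
    unfolding q by (simp add: power2_eq_square algebra_simps)
  then have A: "(q + 2)^2 div 4 = (m + 1) * (m + 2)" by simp
  have B: "(q + 1)^2 div 4 = (m + 1)^2"
    unfolding q by (simp add: power2_eq_square algebra_simps)
  have e: "2*(m + 1) - 1 = q" "2*m + 1 = q" using q by simp_all
  have "((m + 1) * (m + 2)) ^ q = (m + 2) ^ (2*(m + 1) - 1) * (m + 1) ^ (2*m + 1)"
    unfolding e power_mult_distrib by (rule mult.commute)
  also have "\<dots> \<le> (m + 1) ^ (2*(m + 1) + 1) * (m + 1) ^ (2*m + 1)"
    using Suc_power_le_power[OF m] by (intro mult_right_mono) (auto simp: add.assoc)
  also have "\<dots> = ((m + 1)^2) ^ (q + 1)"
  proof -
    have "(2*(m + 1) + 1) + (2*m + 1) = 2 * (q + 1)" using q by simp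
    then show ?thesis by (metis power_add power_mult)
  qed
  finally show ?thesis unfolding A B .
qed

lemma cq_power_le:
  fixes q :: nat
  assumes "q \<ge> 3"
  shows "cq q ^ q \<le> cq (q - 1) ^ (q + 1)"
proof -
  have "q - 1 + 2 = q + 1" using assms by simp
  then have squares: "cq q ^ 2 = real ((q + 2)^2 div 4)" "cq (q - 1) ^ 2 = real ((q + 1)^2 div 4)"
    unfolding cq_def by simp_all
  have "(cq q ^ q) ^ 2 = (cq q ^ 2) ^ q" "(cq (q - 1) ^ (q + 1)) ^ 2 = (cq (q - 1) ^ 2) ^ (q + 1)"
    by (metis power_mult mult.commute)+
  then have "(cq q ^ q) ^ 2 \<le> (cq (q - 1) ^ (q + 1)) ^ 2"
    using quarter_square_power_le[OF assms] unfolding squares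
    by (metis of_nat_le_iff of_nat_power)
  then show ?thesis
    by (rule power2_le_imp_le) (simp add: cq_pos less_imp_le)
qed

lemma antimono_on_shifted_fraction:
  fixes \<alpha> \<beta> s :: real
  assumes "\<alpha> * s \<le> \<beta>"
  shows "antimono_on {t. 0 < s + t} (\<lambda>t. (\<beta> + t * \<alpha>) / (s + t))"
proof (rule monotone_onI)
  fix t u :: real
  assume "t \<in> {t. 0 < s + t}" "u \<in> {t. 0 < s + t}" "t \<le> u"
  then have pos: "0 < s + t" "s + t \<le> s + u" by auto
  have split: "(\<beta> + x * \<alpha>) / (s + x) = \<alpha> + (\<beta> - \<alpha> * s) / (s + x)" if "0 < s + x" for x
    using that by (simp add: field_simps)
  have "(\<beta> - \<alpha> * s) / (s + u) \<le> (\<beta> - \<alpha> * s) / (s + t)"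
    using assms pos by (intro divide_left_mono) auto
  then show "(\<beta> + u * \<alpha>) / (s + u) \<le> (\<beta> + t * \<alpha>) / (s + t)"
    using pos split[of t] split[of u] by simp
qed

lemma interpolation_powr_eq_exp:
  fixes c d t x :: real
  assumes "0 < c" "0 < d"
  shows "(c powr t * d powr (1 - t)) powr (1 / x) = exp ((ln d + t * (ln c - ln d)) / x)"
proof -
  have "c powr t * d powr (1 - t) = exp (ln d + t * (ln c - ln d))"
    using assms by (simp add: powr_def exp_add [symmetric] algebra_simps)
  then show ?thesis by (simp add: powr_def)
qed

lemma powr_le_powr_iff_mult_ln:
  fixes c d s u :: real
  assumes "0 < c" "0 < d"
  shows "c powr s \<le> d powr u \<longleftrightarrow> s * ln c \<le> u * ln d"
proof -
  have "c powr s \<le> d powr u \<longleftrightarrow> ln (c powr s) \<le> ln (d powr u)"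
    using assms by (intro ln_le_cancel_iff [symmetric]) simp_all
  then show ?thesis by (simp only: ln_powr)
qed

lemma antimono_on_interpolation_root:
  fixes c d s :: real
  assumes "0 < c" "0 < d" "c powr s \<le> d powr (s + 1)"
  shows "antimono_on {t. 0 < s + t} (\<lambda>t. (c powr t * d powr (1 - t)) powr (1 / (s + t)))"
proof -
  have "s * ln c \<le> (s + 1) * ln d"
    using assms by (simp only: powr_le_powr_iff_mult_ln)
  then have "(ln c - ln d) * s \<le> ln d" by (simp add: algebra_simps)
  then have "antimono_on {t. 0 < s + t} (\<lambda>t. (ln d + t * (ln c - ln d)) / (s + t))"
    by (rule antimono_on_shifted_fraction)
  then show ?thesis
    unfolding interpolation_powr_eq_exp[OF assms(1,2)] monotone_on_def by simp
qed

lemma powr_le_powr_add_one_downward: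
  fixes c d p s :: real
  assumes "0 < d" "d \<le> c" "s \<le> p" "c powr p \<le> d powr (p + 1)"
  shows "c powr s \<le> d powr (s + 1)"
proof -
  have "0 < c" using assms by simp
  have "p * ln c \<le> (p + 1) * ln d"
    using assms \<open>0 < c\<close> by (simp only: powr_le_powr_iff_mult_ln)
  moreover have "(p - s) * ln d \<le> (p - s) * ln c"
    using assms \<open>0 < c\<close> by (intro mult_left_mono) auto
  ultimately have "s * ln c \<le> (s + 1) * ln d" by (simp add: algebra_simps)
  then show ?thesis
    using assms \<open>0 < c\<close> by (simp only: powr_le_powr_iff_mult_ln)
qed

theorem corollary2p13:
  fixes q :: nat and r :: real
  assumes "q \<ge> 3" and "0 \<le> r" and "r \<le> 1"
  shows "antimono_on {0..1}
           (\<lambda>t::real. (cq q powr t * cq (q - 1) powr (1 - t)) powr (1 / (real q + t - r)))"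
proof -
  define s where "s = real q - r"
  have "cq (q - 1) \<le> cq q"
    by (rule monoD[OF cq_mono]) simp
  moreover have "s \<le> real q"
    using assms by (simp add: s_def)
  moreover have "cq q powr real q \<le> cq (q - 1) powr real (q + 1)"
    unfolding powr_realpow[OF cq_pos] by (rule cq_power_le[OF assms(1)])
  then have "cq q powr real q \<le> cq (q - 1) powr (real q + 1)"
    by (simp only: of_nat_add of_nat_1)
  ultimately have "cq q powr s \<le> cq (q - 1) powr (s + 1)"
    by (rule powr_le_powr_add_one_downward[OF cq_pos])
  then have "antimono_on {t. 0 < s + t} (\<lambda>t. (cq q powr t * cq (q - 1) powr (1 - t)) powr (1 / (s + t)))"
    by (rule antimono_on_interpolation_root[OF cq_pos cq_pos])
  moreover have "{0..1} \<subseteq> {t. 0 < s + t}"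
    using assms by (auto simp: s_def)
  moreover have "real q + t - r = s + t" for t
    by (simp add: s_def)
  ultimately show ?thesis
    by (simp only:) (rule monotone_on_subset)
qed

end
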